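(* Almost surely, $$\lim_{n\to\infty}\frac{\xi(n)}{\log n}=\lim_{n\to\infty}\frac{\eta(n)}{\log n}=\frac{-1}{\log(2q)}.$$
   Context: Let $0<q<p<1$ with $p+q=1$. Let $X_1,X_2,\dots$ be i.i.d. random variables with $\mathbf P(X_1=1)=p$, $\mathbf P(X_1=-1)=q$, and let $S_0=0$, $S_n=X_1+\dots+X_n$ (simple asymmetric random walk on $\mathbb Z$). For $z\in\mathbb Z$ and $n\ge1$ let $\xi(z,n)=\#\{k:0<k\le n,\ S_k=z\}$ be the local time, and $\xi(z,\infty)=\lim_{n\to\infty}\xi(z,n)$ (finite a.s. since the walk is transient). Define $\xi(n)=\max_{z\in\mathbb Z}\xi(z,n)$ and $\eta(n)=\max_{0\le j\le n}\xi(S_j,\infty)$. $\log$ denotes the natural logarithm. *)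

theory Defs
  imports "HOL-Probability.Probability"
begin

definition walk :: "(nat \<Rightarrow> 'a \<Rightarrow> int) \<Rightarrow> nat \<Rightarrow> 'a \<Rightarrow> int" where
  "walk X n w = (\<Sum>k\<in>{1..n}. X k w)"

definition local_time :: "(nat \<Rightarrow> 'a \<Rightarrow> int) \<Rightarrow> int \<Rightarrow> nat \<Rightarrow> 'a \<Rightarrow> nat" where
  "local_time X z n w = card {k. 0 < k \<and> k \<le> n \<and> walk X k w = z}"

text \<open>Total local time xi(z,infinity) = #{k : 0 < k, S_k = z} (the increasing limit of
  xi(z,n); finite almost surely, and on the null set where it is infinite card gives 0).\<close>
definition total_local_time :: "(nat \<Rightarrow> 'a \<Rightarrow> int) \<Rightarrow> int \<Rightarrow> 'a \<Rightarrow> nat" where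
  "total_local_time X z w = card {k. 0 < k \<and> walk X k w = z}"

definition max_local_time :: "(nat \<Rightarrow> 'a \<Rightarrow> int) \<Rightarrow> nat \<Rightarrow> 'a \<Rightarrow> nat" where
  "max_local_time X n w = Max {local_time X z n w | z. True}"

definition eta :: "(nat \<Rightarrow> 'a \<Rightarrow> int) \<Rightarrow> nat \<Rightarrow> 'a \<Rightarrow> nat" where
  "eta X n w = Max {total_local_time X (walk X j w) w | j. j \<le> n}"

end

theory Submission
  imports Defs
begin

text \<open>
  Let \<open>h\<close> be the probability that the walk ever steps below its starting level. A first-step
  analysis gives \<open>h = q + p h\<^sup>2\<close>, whose relevant root is \<open>q/p\<close>, so the walk returns to its starting
  level with probability \<open>p (q/p) + q = 2q < 1\<close> and the number of visits to any level has a
  geometric tail with ratio \<open>2q\<close>. A union bound over the \<open>O(n)\<close> levels reachable by time \<open>n\<close> and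
  Borel--Cantelli along \<open>n = 2\<^sup>m\<close> give \<open>\<eta>(n) \<le> (1 + \<epsilon>) log n / (- log (2q))\<close> eventually.
  Conversely, split \<open>[0, 2\<^sup>m]\<close> into about \<open>2\<^sup>m / (k T)\<close> independent blocks of length \<open>k T\<close>; in each
  block the walk returns \<open>k\<close> times to its initial level with probability at least \<open>\<rho>\<^sup>k\<close>, where \<open>\<rho>\<close>
  is slightly below \<open>2q\<close>. Hence no level reaches local time \<open>k = (1 - \<epsilon>) m log 2 / (- log (2q))\<close>
  with probability at most \<open>exp (1 - 2\<^sup>m \<rho>\<^sup>k / (k T))\<close>, which is again summable in \<open>m\<close>.
  Since \<open>\<xi>(n) \<le> \<eta>(n)\<close>, both normalised quantities converge.
\<close>

lemma eventually_dyadic: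
  assumes "eventually P sequentially"
  shows "eventually (\<lambda>n::nat. \<exists>m. P m \<and> 2 ^ m \<le> n \<and> n < 2 ^ Suc m) sequentially"
proof -
  obtain M0 where M0: "\<And>m. M0 \<le> m \<Longrightarrow> P m"
    using assms by (auto simp: eventually_sequentially)
  have "\<exists>m. P m \<and> 2 ^ m \<le> n \<and> n < 2 ^ Suc m" if n: "2 ^ M0 \<le> n" for n :: nat
  proof -
    have "1 \<le> n"
      using n by (meson le_trans one_le_numeral one_le_power)
    then obtain m where m: "2 ^ m \<le> n" "n < 2 ^ Suc m"
      using ex_power_ivl1[of 2 n] by auto
    then have "(2::nat) ^ M0 < 2 ^ Suc m"
      using n by linarith
    then have "M0 < Suc m"
      using power_strict_increasing_iff[of "2::nat" M0 "Suc m"] by simp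
    then have "P m"
      using M0 by simp
    then show ?thesis
      using m by blast
  qed
  then show ?thesis
    unfolding eventually_sequentially by blast
qed

lemma ln_ge_if_pow2_le: "2 ^ m \<le> n \<Longrightarrow> real m * ln 2 \<le> ln (real n)"
proof -
  assume "2 ^ m \<le> n"
  then have "(2::real) ^ m \<le> real n"
    by (metis of_nat_le_iff of_nat_numeral of_nat_power)
  then have "ln ((2::real) ^ m) \<le> ln (real n)"
    by (rule ln_mono) simp
  then show ?thesis
    by (simp add: ln_realpow)
qed

lemma ln_less_if_less_pow2: "0 < n \<Longrightarrow> n < 2 ^ Suc m \<Longrightarrow> ln (real n) < (real m + 1) * ln 2"
proof -
  assume "0 < n" "n < 2 ^ Suc m"
  then have "0 < real n" "real n < (2::real) ^ Suc m"
    by (simp, metis of_nat_less_iff of_nat_numeral of_nat_power)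
  then have "ln (real n) < ln ((2::real) ^ Suc m)"
    by simp
  also have "\<dots> = (real m + 1) * ln 2"
    by (subst ln_realpow) auto
  finally show ?thesis .
qed

lemma exp_neg_le_inverse:
  fixes x :: real
  assumes "0 < x"
  shows "exp (- x) \<le> 1 / x"
proof -
  have "x \<le> exp x"
    using exp_ge_add_one_self[of x] by linarith
  then show ?thesis
    using assms by (simp add: exp_minus divide_simps)
qed

lemma summable_linear_times_power:
  fixes x :: real
  assumes x: "0 < x" "x < 1"
  shows "summable (\<lambda>m. (\<alpha> * real m + \<beta>) * x ^ m)"
proof -
  define r where "r = sqrt x"
  have r: "0 < r" "r < 1" "x = r * r"
    unfolding r_def using x by (auto simp: real_sqrt_less_iff[of x 1, simplified])
  have "(\<lambda>m. real m * r ^ m) \<longlonglongrightarrow> 0"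
    by (rule powser_times_n_limit_0) (use r in simp)
  then have "eventually (\<lambda>m. real m * r ^ m < 1) sequentially"
    by (rule order_tendstoD) simp
  then have "eventually (\<lambda>m. norm (real m * x ^ m) \<le> r ^ m) sequentially"
  proof eventually_elim
    case (elim m)
    have "norm (real m * x ^ m) = (real m * r ^ m) * r ^ m"
      using x r(3) by (simp add: power_mult_distrib)
    also have "\<dots> \<le> r ^ m"
      using elim r by (intro mult_left_le_one_le) auto
    finally show ?case .
  qed
  then have "summable (\<lambda>m. real m * x ^ m)"
    using r by (intro summable_comparison_test_ev[OF _ summable_geometric]) auto
  then have "summable (\<lambda>m. \<alpha> * (real m * x ^ m) + \<beta> * x ^ m)"
    using x by (intro summable_add summable_mult summable_geometric) auto
  then show ?thesis
    by (simp add: algebra_simps)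
qed

lemma tendsto_div_ln_if_bounds:
  fixes g :: "nat \<Rightarrow> real"
  assumes c: "0 < c"
    and lower: "\<And>j. \<exists>C. eventually (\<lambda>n. (1 - 1 / (real j + 2)) * c * ln (real n) - C \<le> g n) sequentially"
    and upper: "\<And>j. \<exists>C. eventually (\<lambda>n. g n \<le> (1 + 1 / (real j + 2)) * c * ln (real n) + C) sequentially"
  shows "(\<lambda>n. g n / ln (real n)) \<longlonglongrightarrow> c"
proof (rule tendstoI)
  fix \<delta> :: real assume \<delta>: "0 < \<delta>"
  obtain j :: nat where "2 * c / \<delta> < real j"
    using reals_Archimedean2 by blast
  then have j: "c / (real j + 2) < \<delta> / 2"
    using \<delta> by (simp add: field_simps)
  obtain C1 C2 where
    C1: "eventually (\<lambda>n. (1 - 1 / (real j + 2)) * c * ln (real n) - C1 \<le> g n) sequentially" and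
    C2: "eventually (\<lambda>n. g n \<le> (1 + 1 / (real j + 2)) * c * ln (real n) + C2) sequentially"
    using lower upper by blast
  have "filterlim (\<lambda>n. ln (real n)) at_top sequentially"
    by (rule filterlim_compose[OF ln_at_top filterlim_real_sequentially])
  then have "eventually (\<lambda>n. max 1 (2 * max \<bar>C1\<bar> \<bar>C2\<bar> / \<delta>) < ln (real n)) sequentially"
    unfolding filterlim_at_top_dense by blast
  with C1 C2 show "eventually (\<lambda>n. dist (g n / ln (real n)) c < \<delta>) sequentially"
  proof eventually_elim
    case (elim n)
    define l where "l = ln (real n)"
    have l: "0 < l" "max \<bar>C1\<bar> \<bar>C2\<bar> < \<delta> / 2 * l"
      using elim(3) \<delta> unfolding l_def by (auto simp: field_simps)
    define E where "E = c / (real j + 2) * l"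
    have "E \<le> \<delta> / 2 * l"
      unfolding E_def using j l by (intro mult_right_mono) auto
    moreover have "c * l - E - C1 \<le> g n" "g n \<le> c * l + E + C2"
      using elim(1,2) unfolding E_def l_def by (simp_all add: algebra_simps)
    ultimately have "\<bar>g n - c * l\<bar> < \<delta> * l"
      using l by (auto simp: abs_less_iff)
    then show ?case
      using l by (simp add: dist_real_def l_def[symmetric] abs_less_iff field_simps)
  qed
qed

lemma tendsto_div_ln_sandwich:
  fixes g h :: "nat \<Rightarrow> real"
  assumes c: "0 < c" and le: "\<And>n. g n \<le> h n"
    and lower: "\<And>j. \<exists>C. eventually (\<lambda>n. (1 - 1 / (real j + 2)) * c * ln (real n) - C \<le> g n) sequentially"
    and upper: "\<And>j. \<exists>C. eventually (\<lambda>n. h n \<le> (1 + 1 / (real j + 2)) * c * ln (real n) + C) sequentially"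
  shows "(\<lambda>n. g n / ln (real n)) \<longlonglongrightarrow> c" "(\<lambda>n. h n / ln (real n)) \<longlonglongrightarrow> c"
proof -
  have "\<exists>C. eventually (\<lambda>n. g n \<le> (1 + 1 / (real j + 2)) * c * ln (real n) + C) sequentially" for j
  proof -
    obtain C where "eventually (\<lambda>n. h n \<le> (1 + 1 / (real j + 2)) * c * ln (real n) + C) sequentially"
      using upper by blast
    then have "eventually (\<lambda>n. g n \<le> (1 + 1 / (real j + 2)) * c * ln (real n) + C) sequentially"
      by (rule eventually_mono) (use le in \<open>blast intro: order_trans\<close>)
    then show ?thesis
      by blast
  qed
  then show "(\<lambda>n. g n / ln (real n)) \<longlonglongrightarrow> c"
    by (rule tendsto_div_ln_if_bounds[OF c lower])
  have "\<exists>C. eventually (\<lambda>n. (1 - 1 / (real j + 2)) * c * ln (real n) - C \<le> h n) sequentially" for j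
  proof -
    obtain C where "eventually (\<lambda>n. (1 - 1 / (real j + 2)) * c * ln (real n) - C \<le> g n) sequentially"
      using lower by blast
    then have "eventually (\<lambda>n. (1 - 1 / (real j + 2)) * c * ln (real n) - C \<le> h n) sequentially"
      by (rule eventually_mono) (use le in \<open>blast intro: order_trans\<close>)
    then show ?thesis
      by blast
  qed
  then show "(\<lambda>n. h n / ln (real n)) \<longlonglongrightarrow> c"
    by (rule tendsto_div_ln_if_bounds[OF c _ upper])
qed

section \<open>Sequences of \<open>\<plusminus>1\<close> steps\<close>

locale path_space =
  fixes p q :: real
  assumes p_nonneg: "0 \<le> p" and q_nonneg: "0 \<le> q" and p_plus_q: "p + q = 1"
begin

definition paths :: "nat \<Rightarrow> int list set" where
  "paths N = {s. length s = N \<and> set s \<subseteq> {-1, 1}}"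

definition path_weight :: "int list \<Rightarrow> real" where
  "path_weight s = prod_list (map (\<lambda>x. if x = 1 then p else q) s)"

text \<open>The law of the first \<open>N\<close> steps as an explicit weighted sum; \<open>prob_steps\<close> below identifies it
  with the probability of the corresponding event of the walk.\<close>

definition path_prob :: "nat \<Rightarrow> (int list \<Rightarrow> bool) \<Rightarrow> real" where
  "path_prob N P = (\<Sum>s\<in>{s\<in>paths N. P s}. path_weight s)"

lemma paths_length: "s \<in> paths N \<Longrightarrow> length s = N"
  by (simp add: paths_def)

lemma paths_set: "s \<in> paths N \<Longrightarrow> set s \<subseteq> {-1, 1}"
  by (simp add: paths_def)

lemma finite_paths: "finite (paths N)"
proof -
  have "paths N \<subseteq> {s. set s \<subseteq> {-1, 1} \<and> length s = N}"
    by (auto simp: paths_def)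
  then show ?thesis
    using finite_lists_length_eq[of "{-1, 1::int}" N] by (rule finite_subset) simp
qed

lemma path_weight_nonneg: "path_weight s \<ge> 0"
  unfolding path_weight_def using p_nonneg q_nonneg by (induction s) auto

lemma paths_0: "paths 0 = {[]}"
  by (auto simp: paths_def)

lemma paths_Suc: "paths (Suc N) = (\<lambda>s. 1 # s) ` paths N \<union> (\<lambda>s. (-1) # s) ` paths N"
proof
  show "paths (Suc N) \<subseteq> (\<lambda>s. 1 # s) ` paths N \<union> (\<lambda>s. (-1) # s) ` paths N"
  proof
    fix s assume "s \<in> paths (Suc N)"
    then obtain x s' where "s = x # s'" "s' \<in> paths N" "x \<in> {-1, 1}"
      by (cases s) (auto simp: paths_def)
    then show "s \<in> (\<lambda>s. 1 # s) ` paths N \<union> (\<lambda>s. (-1) # s) ` paths N" by auto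
  qed
qed (auto simp: paths_def)

lemma path_prob_0: "path_prob 0 P = (if P [] then 1 else 0)"
  by (simp add: path_prob_def paths_0 path_weight_def Collect_conv_if)

lemma path_prob_False: "path_prob N (\<lambda>_. False) = 0"
  by (simp add: path_prob_def)

lemma path_prob_Suc:
  "path_prob (Suc N) P = p * path_prob N (\<lambda>s. P (1 # s)) + q * path_prob N (\<lambda>s. P ((-1) # s))"
proof -
  let ?A = "{s\<in>paths N. P (1 # s)}" and ?B = "{s\<in>paths N. P ((-1) # s)}"
  have split: "{s\<in>paths (Suc N). P s} = (\<lambda>s. 1 # s) ` ?A \<union> (\<lambda>s. (-1) # s) ` ?B"
    by (auto simp: paths_Suc)
  have fin: "finite ?A" "finite ?B"
    using finite_paths by auto
  have "path_prob (Suc N) P = (\<Sum>s\<in>(\<lambda>s. 1 # s) ` ?A. path_weight s) + (\<Sum>s\<in>(\<lambda>s. (-1) # s) ` ?B. path_weight s)"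
    unfolding path_prob_def split by (rule sum.union_disjoint) (use fin in auto)
  also have "\<dots> = (\<Sum>s\<in>?A. p * path_weight s) + (\<Sum>s\<in>?B. q * path_weight s)"
    by (simp add: sum.reindex path_weight_def)
  finally show ?thesis
    by (simp add: path_prob_def sum_distrib_left)
qed

lemma path_prob_nonneg: "path_prob N P \<ge> 0"
  unfolding path_prob_def by (intro sum_nonneg path_weight_nonneg)

lemma path_prob_cong: "(\<And>s. s \<in> paths N \<Longrightarrow> P s \<longleftrightarrow> Q s) \<Longrightarrow> path_prob N P = path_prob N Q"
  unfolding path_prob_def by (rule sum.cong) auto

lemma path_prob_mono: "(\<And>s. s \<in> paths N \<Longrightarrow> P s \<Longrightarrow> Q s) \<Longrightarrow> path_prob N P \<le> path_prob N Q"
  unfolding path_prob_def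
  by (rule sum_mono2) (auto intro: finite_subset[OF _ finite_paths] path_weight_nonneg)

lemma path_prob_split: "path_prob N P = path_prob N (\<lambda>s. P s \<and> Q s) + path_prob N (\<lambda>s. P s \<and> \<not> Q s)"
proof -
  have "{s\<in>paths N. P s} = {s\<in>paths N. P s \<and> Q s} \<union> {s\<in>paths N. P s \<and> \<not> Q s}"
    by auto
  then show ?thesis
    unfolding path_prob_def
    by (simp, subst sum.union_disjoint[symmetric]) (auto intro: finite_subset[OF _ finite_paths])
qed

lemma path_prob_True: "path_prob N (\<lambda>_. True) = 1"
  by (induction N) (simp_all add: path_prob_0 path_prob_Suc p_plus_q)

lemma path_prob_le_1: "path_prob N P \<le> 1"
  using path_prob_mono[of N P "\<lambda>_. True"] path_prob_True by simp

lemma path_prob_not: "path_prob N (\<lambda>s. \<not> P s) = 1 - path_prob N P"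
  using path_prob_split[of N "\<lambda>_. True" P] path_prob_True by simp

lemma path_prob_disj:
  "(\<And>s. s \<in> paths N \<Longrightarrow> \<not> (P s \<and> Q s)) \<Longrightarrow> path_prob N (\<lambda>s. P s \<or> Q s) = path_prob N P + path_prob N Q"
  using path_prob_split[of N "\<lambda>s. P s \<or> Q s" P] by (metis (mono_tags, lifting) path_prob_cong)

lemma path_prob_Bex_disjoint:
  assumes "finite T"
    and "\<And>s t t'. s \<in> paths N \<Longrightarrow> t \<in> T \<Longrightarrow> t' \<in> T \<Longrightarrow> t \<noteq> t' \<Longrightarrow> \<not> (P t s \<and> P t' s)"
  shows "path_prob N (\<lambda>s. \<exists>t\<in>T. P t s) = (\<Sum>t\<in>T. path_prob N (P t))"
  using assms
proof (induction T rule: finite_induct)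
  case empty
  then show ?case by (simp add: path_prob_False)
next
  case (insert x F)
  have "path_prob N (\<lambda>s. \<exists>t\<in>insert x F. P t s) = path_prob N (\<lambda>s. P x s \<or> (\<exists>t\<in>F. P t s))"
    by simp
  also have "\<dots> = path_prob N (P x) + path_prob N (\<lambda>s. \<exists>t\<in>F. P t s)"
    by (rule path_prob_disj) (use insert.prems insert.hyps in blast)
  also have "path_prob N (\<lambda>s. \<exists>t\<in>F. P t s) = (\<Sum>t\<in>F. path_prob N (P t))"
    by (rule insert.IH) (use insert.prems in blast)
  finally show ?case
    using insert.hyps by simp
qed

lemma path_prob_append:
  "path_prob (a + b) (\<lambda>s. P (take a s) \<and> Q (drop a s)) = path_prob a P * path_prob b Q"
proof (induction a arbitrary: P)
  case 0
  then show ?case by (cases "P []") (simp_all add: path_prob_0 path_prob_False)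
next
  case (Suc a)
  show ?case
    using Suc.IH[of "\<lambda>s. P (1 # s)"] Suc.IH[of "\<lambda>s. P ((-1) # s)"]
    by (simp add: path_prob_Suc algebra_simps)
qed

lemma path_prob_take: "n \<le> N \<Longrightarrow> path_prob N (\<lambda>s. P (take n s)) = path_prob n P"
  using path_prob_append[of n "N - n" P "\<lambda>_. True"] path_prob_True by simp

lemma path_prob_blocks:
  "path_prob (m * L + r) (\<lambda>s. \<forall>i<m. B (take L (drop (i * L) s))) = path_prob L B ^ m"
proof (induction m)
  case 0
  then show ?case by (simp add: path_prob_True)
next
  case (Suc m)
  have "path_prob (Suc m * L + r) (\<lambda>s. \<forall>i<Suc m. B (take L (drop (i * L) s)))
      = path_prob (L + (m * L + r))
          (\<lambda>s. B (take L (take L s)) \<and> (\<lambda>u. \<forall>i<m. B (take L (drop (i * L) u))) (drop L s))"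
    by (simp add: All_less_Suc2 drop_drop add.commute add.left_commute)
  also have "\<dots> = path_prob L (\<lambda>u. B (take L u)) * path_prob (m * L + r) (\<lambda>u. \<forall>i<m. B (take L (drop (i * L) u)))"
    by (rule path_prob_append)
  also have "path_prob L (\<lambda>u. B (take L u)) = path_prob L B"
    using path_prob_take[of L L B] by simp
  finally show ?case
    using Suc.IH by simp
qed

end


section \<open>Visits and first passages\<close>

text \<open>A list \<open>s\<close> of steps encodes the walk \<open>S\<^sub>t = sum_list (take t s)\<close>, so \<open>visit_count z s\<close> is
  the local time \<open>\<xi>(z, length s)\<close>.\<close>

definition visit_count :: "int \<Rightarrow> int list \<Rightarrow> nat" where
  "visit_count z s = card {t\<in>{1..length s}. sum_list (take t s) = z}"

definition visits :: "int \<Rightarrow> int list \<Rightarrow> bool" where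
  "visits z s \<longleftrightarrow> (\<exists>t\<in>{1..length s}. sum_list (take t s) = z)"

definition first_passage :: "int \<Rightarrow> int list \<Rightarrow> bool" where
  "first_passage z u \<longleftrightarrow> u \<noteq> [] \<and> sum_list u = z \<and> \<not> visits z (butlast u)"

lemma visits_Nil [simp]: "\<not> visits z []"
  by (simp add: visits_def)

lemma visits_iff_visit_count_pos: "visits z s \<longleftrightarrow> 0 < visit_count z s"
  by (auto simp: visits_def visit_count_def card_gt_0_iff)

lemma visit_count_Nil [simp]: "visit_count z [] = 0"
  by (simp add: visit_count_def)

lemma visit_count_Cons:
  "visit_count z (x # s) = (if x = z then 1 else 0) + visit_count (z - x) s"
proof -
  let ?A = "{t\<in>{1..length s}. sum_list (take t s) = z - x}"
  have "{t\<in>{1..length (x # s)}. sum_list (take t (x # s)) = z}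
      = {t. t = 1 \<and> x = z} \<union> Suc ` ?A"
  proof (intro set_eqI iffI)
    fix t assume t: "t \<in> {t\<in>{1..length (x # s)}. sum_list (take t (x # s)) = z}"
    then obtain u where u: "t = Suc u" by (cases t) auto
    show "t \<in> {t. t = 1 \<and> x = z} \<union> Suc ` ?A"
    proof (cases u)
      case 0
      then show ?thesis using t u by simp
    next
      case (Suc u')
      then have "u \<in> ?A" using t u by auto
      then show ?thesis using u by blast
    qed
  qed auto
  moreover have "{t. t = 1 \<and> x = z} \<inter> Suc ` ?A = {}"
    by auto
  ultimately show ?thesis
    unfolding visit_count_def by (simp add: card_Un_disjoint card_image)
qed

lemma visit_count_append:
  "visit_count z (u @ v) = visit_count z u + visit_count (z - sum_list u) v"
  by (induction u arbitrary: z) (simp_all add: visit_count_Cons algebra_simps)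

lemma visit_count_singleton: "visit_count z [x] = (if x = z then 1 else 0)"
  by (simp add: visit_count_Cons)

lemma visits_Cons: "visits z (x # s) \<longleftrightarrow> x = z \<or> visits (z - x) s"
  by (simp add: visits_iff_visit_count_pos visit_count_Cons)

lemma visits_snoc: "visits z (u @ [x]) \<longleftrightarrow> visits z u \<or> sum_list (u @ [x]) = z"
  by (auto simp: visits_iff_visit_count_pos visit_count_append visit_count_singleton)

lemma visit_count_take_le: "visit_count z (take n s) \<le> visit_count z s"
  using visit_count_append[of z "take n s" "drop n s"] by simp

lemma visits_take: "visits z (take n s) \<Longrightarrow> visits z s"
  using visit_count_take_le[of z n s] by (simp add: visits_iff_visit_count_pos)

lemma visit_count_drop_le: "visit_count 0 (drop j s) \<le> visit_count (sum_list (take j s)) s"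
  using visit_count_append[of "sum_list (take j s)" "take j s" "drop j s"] by simp

lemma visit_count_first_passage: "first_passage z u \<Longrightarrow> visit_count z u = 1"
proof -
  assume u: "first_passage z u"
  then have split: "u = butlast u @ [last u]" and sum: "sum_list (butlast u) + last u = z"
    unfolding first_passage_def by (metis append_butlast_last_id sum_list_append sum_list.Cons
        sum_list.Nil add_0_right)+
  have "visit_count z (butlast u) = 0"
    using u by (simp add: first_passage_def visits_iff_visit_count_pos)
  then show ?thesis
    using visit_count_append[of z "butlast u" "[last u]"] sum split
    by (simp add: visit_count_singleton)
qed

lemma first_passage_visits: "first_passage z u \<Longrightarrow> visits z u"
  by (simp add: visits_iff_visit_count_pos visit_count_first_passage)

lemma visit_count_after_first_passage:
  "first_passage z (take t s) \<Longrightarrow> visit_count z s = Suc (visit_count 0 (drop t s))"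
  using visit_count_append[of z "take t s" "drop t s"]
  by (simp add: visit_count_first_passage first_passage_def)

lemma first_passage_take_unique:
  assumes "first_passage z (take t s)" "first_passage z (take t' s)" "t \<le> length s" "t' \<le> length s"
  shows "t = t'"
proof -
  have no_earlier: False if "first_passage z (take a s)" "first_passage z (take b s)" "a < b" "b \<le> length s"
    for a b
  proof -
    have "take a s = take a (butlast (take b s))"
      using that(3,4) by (simp add: butlast_take min_def)
    then have "visits z (butlast (take b s))"
      using first_passage_visits[OF that(1)] visits_take by metis
    then show False
      using that(2) by (simp add: first_passage_def)
  qed
  show ?thesis
    using no_earlier[of t t'] no_earlier[of t' t] assms by (cases t t' rule: linorder_cases) auto
qed

lemma visits_take_iff_first_passage:
  "visits z (take n s) \<longleftrightarrow> (\<exists>t\<le>n. first_passage z (take t s))"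
proof (induction n)
  case 0
  then show ?case by (simp add: visits_def first_passage_def)
next
  case (Suc n)
  have ex_Suc: "(\<exists>t\<le>Suc n. first_passage z (take t s))
      \<longleftrightarrow> (\<exists>t\<le>n. first_passage z (take t s)) \<or> first_passage z (take (Suc n) s)"
    by (auto simp: le_Suc_eq)
  show ?case
  proof (cases "n < length s")
    case True
    then have snoc: "take (Suc n) s = take n s @ [s ! n]"
      by (rule take_Suc_conv_app_nth)
    have "first_passage z (take (Suc n) s) \<longleftrightarrow> \<not> visits z (take n s) \<and> sum_list (take (Suc n) s) = z"
      by (auto simp: first_passage_def snoc)
    moreover have "visits z (take (Suc n) s) \<longleftrightarrow> visits z (take n s) \<or> sum_list (take (Suc n) s) = z"
      unfolding snoc by (rule visits_snoc)
    ultimately show ?thesis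
      using ex_Suc Suc.IH by blast
  next
    case False
    then show ?thesis
      using ex_Suc Suc.IH first_passage_visits[of z s] by auto
  qed
qed

lemma visits_iff_first_passage: "visits z s \<longleftrightarrow> (\<exists>t\<le>length s. first_passage z (take t s))"
  using visits_take_iff_first_passage[of z "length s" s] by simp

lemma Suc_le_visit_count_iff:
  "Suc k \<le> visit_count z s \<longleftrightarrow> (\<exists>t\<le>length s. first_passage z (take t s) \<and> k \<le> visit_count 0 (drop t s))"
proof
  assume "Suc k \<le> visit_count z s"
  moreover obtain t where "t \<le> length s" "first_passage z (take t s)"
    using calculation visits_iff_first_passage[of z s] by (auto simp: visits_iff_visit_count_pos)
  ultimately show "\<exists>t\<le>length s. first_passage z (take t s) \<and> k \<le> visit_count 0 (drop t s)"
    using visit_count_after_first_passage by fastforce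
qed (auto simp: visit_count_after_first_passage)

lemma visits_between:
  assumes "set s \<subseteq> {-1, 1}" "visits z s" "0 < b \<and> b \<le> z \<or> z \<le> b \<and> b < 0"
  shows "visits b s"
  using assms
proof (induction s arbitrary: z b)
  case Nil
  then show ?case by simp
next
  case (Cons x s)
  then have x: "x = 1 \<or> x = -1" and s: "set s \<subseteq> {-1, 1}"
    by auto
  show ?case
  proof (cases "x = z \<or> x = b")
    case True
    then show ?thesis
      using Cons.prems(3) x by (auto simp: visits_Cons)
  next
    case False
    then have "visits (z - x) s"
      using Cons.prems(2) by (simp add: visits_Cons)
    moreover have "0 < b - x \<and> b - x \<le> z - x \<or> z - x \<le> b - x \<and> b - x < 0"
      using Cons.prems(3) x False by auto
    ultimately show ?thesis
      using Cons.IH[OF s] by (simp add: visits_Cons)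
  qed
qed

lemma visits_double:
  assumes s: "set s \<subseteq> {-1, 1}" and a: "a \<in> {-1, 1}"
  shows "visits (2 * a) s \<longleftrightarrow> (\<exists>t\<le>length s. first_passage a (take t s) \<and> visits a (drop t s))"
proof -
  have between: "0 < a \<and> a \<le> 2 * a \<or> 2 * a \<le> a \<and> a < 0"
    using a by auto
  have count: "visit_count (2 * a) s = visit_count (2 * a) (take t s) + visit_count a (drop t s)"
    if "first_passage a (take t s)" for t
    using that visit_count_append[of "2 * a" "take t s" "drop t s"] by (simp add: first_passage_def)
  show ?thesis
  proof
    assume double: "visits (2 * a) s"
    obtain t where t: "t \<le> length s" "first_passage a (take t s)"
      using visits_between[OF s double between] by (auto simp: visits_iff_first_passage)
    let ?u = "take t s"
    have "\<not> visits (2 * a) ?u"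
    proof
      assume "visits (2 * a) ?u"
      moreover have "?u = butlast ?u @ [last ?u]" "sum_list ?u \<noteq> 2 * a"
        using t(2) a by (auto simp: first_passage_def)
      ultimately have "visits (2 * a) (butlast ?u)"
        using visits_snoc[of "2 * a" "butlast ?u" "last ?u"] by simp
      moreover have "set (butlast ?u) \<subseteq> {-1, 1}"
        using s by (meson in_set_butlastD in_set_takeD subset_iff)
      ultimately have "visits a (butlast ?u)"
        using visits_between between by blast
      then show False
        using t(2) by (simp add: first_passage_def)
    qed
    then have "visits a (drop t s)"
      using double count[OF t(2)] by (simp add: visits_iff_visit_count_pos)
    then show "\<exists>t\<le>length s. first_passage a (take t s) \<and> visits a (drop t s)"
      using t by blast
  next
    assume "\<exists>t\<le>length s. first_passage a (take t s) \<and> visits a (drop t s)"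
    then obtain t where "first_passage a (take t s)" "visits a (drop t s)"
      by blast
    then show "visits (2 * a) s"
      using count by (simp add: visits_iff_visit_count_pos)
  qed
qed

context path_space
begin

lemma path_prob_first_passage_decomp:
  "path_prob N (\<lambda>s. \<exists>t\<le>N. first_passage z (take t s) \<and> G t (drop t s))
    = (\<Sum>t\<le>N. path_prob t (first_passage z) * path_prob (N - t) (G t))"
proof -
  have "path_prob N (\<lambda>s. \<exists>t\<le>N. first_passage z (take t s) \<and> G t (drop t s))
      = path_prob N (\<lambda>s. \<exists>t\<in>{..N}. first_passage z (take t s) \<and> G t (drop t s))"
    by (rule path_prob_cong) auto
  also have "\<dots> = (\<Sum>t\<le>N. path_prob N (\<lambda>s. first_passage z (take t s) \<and> G t (drop t s)))"
    by (rule path_prob_Bex_disjoint) (auto dest: first_passage_take_unique simp: paths_length)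
  also have "\<dots> = (\<Sum>t\<le>N. path_prob t (first_passage z) * path_prob (N - t) (G t))"
  proof (rule sum.cong)
    fix t assume "t \<in> {..N}"
    then show "path_prob N (\<lambda>s. first_passage z (take t s) \<and> G t (drop t s))
        = path_prob t (first_passage z) * path_prob (N - t) (G t)"
      using path_prob_append[of t "N - t" "first_passage z" "G t"] by simp
  qed simp
  finally show ?thesis .
qed

lemma path_prob_visits:
  "path_prob N (visits z) = (\<Sum>t\<le>N. path_prob t (first_passage z))"
  using path_prob_first_passage_decomp[of N z "\<lambda>_ _. True"]
  by (simp add: path_prob_True visits_iff_first_passage paths_length cong: path_prob_cong)

lemma path_prob_Suc_le_visit_count:
  "path_prob N (\<lambda>s. Suc k \<le> visit_count z s)
    = (\<Sum>t\<le>N. path_prob t (first_passage z) * path_prob (N - t) (\<lambda>s. k \<le> visit_count 0 s))"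
  using path_prob_first_passage_decomp[of N z "\<lambda>_ s. k \<le> visit_count 0 s"]
  by (simp add: Suc_le_visit_count_iff paths_length cong: path_prob_cong)

lemma path_prob_visits_double:
  assumes "a \<in> {-1, 1}"
  shows "path_prob N (visits (2 * a)) = (\<Sum>t\<le>N. path_prob t (first_passage a) * path_prob (N - t) (visits a))"
proof -
  have "path_prob N (visits (2 * a))
      = path_prob N (\<lambda>s. \<exists>t\<le>N. first_passage a (take t s) \<and> visits a (drop t s))"
    by (rule path_prob_cong) (use visits_double[OF _ assms] paths_length paths_set in blast)
  then show ?thesis
    using path_prob_first_passage_decomp[of N a "\<lambda>_. visits a"] by simp
qed

lemma path_prob_visits_mono:
  assumes "n \<le> N"
  shows "path_prob n (visits z) \<le> path_prob N (visits z)"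
proof -
  have "path_prob n (visits z) = path_prob N (\<lambda>s. visits z (take n s))"
    using path_prob_take[OF assms] by metis
  also have "\<dots> \<le> path_prob N (visits z)"
    by (rule path_prob_mono) (rule visits_take)
  finally show ?thesis .
qed

lemma path_prob_visits_neg1_Suc: "path_prob (Suc N) (visits (-1)) = q + p * path_prob N (visits (-2))"
  by (simp add: path_prob_Suc visits_Cons path_prob_True)

lemma path_prob_visits_1_Suc: "path_prob (Suc N) (visits 1) = p + q * path_prob N (visits 2)"
  by (simp add: path_prob_Suc visits_Cons path_prob_True)

lemma path_prob_returns_Suc:
  "path_prob (Suc N) (visits 0) = p * path_prob N (visits (-1)) + q * path_prob N (visits 1)"
  by (simp add: path_prob_Suc visits_Cons)

lemma path_prob_visits_double_ge:
  assumes "a \<in> {-1, 1}"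
  shows "path_prob N (visits a) ^ 2 \<le> path_prob (2 * N) (visits (2 * a))"
proof -
  have "path_prob N (visits a) ^ 2 = (\<Sum>t\<le>N. path_prob t (first_passage a) * path_prob N (visits a))"
    by (simp add: path_prob_visits sum_distrib_right power2_eq_square)
  also have "\<dots> \<le> (\<Sum>t\<le>N. path_prob t (first_passage a) * path_prob (2 * N - t) (visits a))"
    by (intro sum_mono mult_left_mono path_prob_nonneg path_prob_visits_mono) auto
  also have "\<dots> \<le> (\<Sum>t\<le>2 * N. path_prob t (first_passage a) * path_prob (2 * N - t) (visits a))"
    by (intro sum_mono2) (auto intro: mult_nonneg_nonneg path_prob_nonneg)
  also have "\<dots> = path_prob (2 * N) (visits (2 * a))"
    by (rule path_prob_visits_double[symmetric, OF assms])
  finally show ?thesis .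
qed

lemma path_prob_returns_pow_le:
  "k * T \<le> N \<Longrightarrow> path_prob T (visits 0) ^ k \<le> path_prob N (\<lambda>s. k \<le> visit_count 0 s)"
proof (induction k arbitrary: N)
  case 0
  then show ?case by (simp add: path_prob_True)
next
  case (Suc k)
  have "path_prob T (visits 0) ^ Suc k = (\<Sum>t\<le>T. path_prob t (first_passage 0) * path_prob T (visits 0) ^ k)"
    by (simp add: path_prob_visits sum_distrib_right)
  also have "\<dots> \<le> (\<Sum>t\<le>T. path_prob t (first_passage 0) * path_prob (N - t) (\<lambda>s. k \<le> visit_count 0 s))"
    using Suc by (intro sum_mono mult_left_mono path_prob_nonneg) auto
  also have "\<dots> \<le> (\<Sum>t\<le>N. path_prob t (first_passage 0) * path_prob (N - t) (\<lambda>s. k \<le> visit_count 0 s))"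
    using Suc.prems by (intro sum_mono2) (auto intro: mult_nonneg_nonneg path_prob_nonneg)
  also have "\<dots> = path_prob N (\<lambda>s. Suc k \<le> visit_count 0 s)"
    by (rule path_prob_Suc_le_visit_count[symmetric])
  finally show ?case .
qed

text \<open>A level visited \<open>k\<close> times within one of the \<open>m\<close> disjoint blocks of length \<open>L\<close> is
  visited \<open>k\<close> times by the whole path, and the blocks are independent.\<close>

lemma path_prob_visit_counts_less:
  assumes "m * L \<le> N"
  shows "path_prob N (\<lambda>s. \<forall>z. visit_count z s < k) \<le> (1 - path_prob L (\<lambda>s. k \<le> visit_count 0 s)) ^ m"
proof -
  obtain r where N: "N = m * L + r"
    using assms le_Suc_ex by blast
  have "path_prob (m * L + r) (\<lambda>s. \<forall>z. visit_count z s < k)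
      \<le> path_prob (m * L + r) (\<lambda>s. \<forall>i<m. \<not> k \<le> visit_count 0 (take L (drop (i * L) s)))"
  proof (rule path_prob_mono)
    fix s assume less: "\<forall>z. visit_count z s < k"
    show "\<forall>i<m. \<not> k \<le> visit_count 0 (take L (drop (i * L) s))"
    proof (intro allI impI)
      fix i
      have "visit_count 0 (take L (drop (i * L) s)) \<le> visit_count (sum_list (take (i * L) s)) s"
        using visit_count_take_le visit_count_drop_le le_trans by blast
      then show "\<not> k \<le> visit_count 0 (take L (drop (i * L) s))"
        using less[rule_format, of "sum_list (take (i * L) s)"] by linarith
    qed
  qed
  also have "\<dots> = (1 - path_prob L (\<lambda>s. k \<le> visit_count 0 s)) ^ m"
    using path_prob_blocks[of m L r "\<lambda>u. \<not> k \<le> visit_count 0 u"] by (simp add: path_prob_not)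
  finally show ?thesis
    unfolding N .
qed

lemma path_prob_visit_counts_less_exp:
  assumes k: "0 < k" and T: "0 < T" and \<rho>: "0 \<le> \<rho>" "\<rho> \<le> path_prob T (visits 0)"
  shows "path_prob N (\<lambda>s. \<forall>z. visit_count z s < k) \<le> exp (1 - real N * \<rho> ^ k / real (k * T))"
proof -
  define B where "B = N div (k * T)"
  have "real B = real_of_int \<lfloor>real N / real (k * T)\<rfloor>"
    unfolding B_def using floor_divide_of_nat_eq[of N "k * T", where 'a=real] by (simp only: of_int_of_nat_eq)
  then have B: "real N / real (k * T) - 1 < real B"
    by simp
  have \<rho>k: "0 \<le> \<rho> ^ k" "\<rho> ^ k \<le> 1"
    using \<rho> path_prob_le_1[of T "visits 0"] by (auto intro: power_le_one)
  have "path_prob N (\<lambda>s. \<forall>z. visit_count z s < k) \<le> (1 - path_prob (k * T) (\<lambda>s. k \<le> visit_count 0 s)) ^ B"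
    by (rule path_prob_visit_counts_less) (simp add: B_def)
  also have "\<dots> \<le> (1 - \<rho> ^ k) ^ B"
  proof (rule power_mono)
    have "\<rho> ^ k \<le> path_prob T (visits 0) ^ k"
      using \<rho> by (intro power_mono) auto
    also have "\<dots> \<le> path_prob (k * T) (\<lambda>s. k \<le> visit_count 0 s)"
      by (rule path_prob_returns_pow_le) simp
    finally show "1 - path_prob (k * T) (\<lambda>s. k \<le> visit_count 0 s) \<le> 1 - \<rho> ^ k"
      by simp
  qed (simp add: path_prob_le_1)
  also have "\<dots> \<le> exp (- (\<rho> ^ k)) ^ B"
    using \<rho>k exp_ge_add_one_self[of "- (\<rho> ^ k)"] by (intro power_mono) auto
  also have "\<dots> = exp (- (real B * \<rho> ^ k))"
    by (simp add: exp_of_nat_mult[symmetric])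
  also have "\<dots> \<le> exp (1 - real N * \<rho> ^ k / real (k * T))"
  proof -
    have "(real N / real (k * T) - 1) * \<rho> ^ k \<le> real B * \<rho> ^ k"
      using B \<rho>k by (intro mult_right_mono) auto
    then show ?thesis
      using \<rho>k by (simp add: algebra_simps)
  qed
  finally show ?thesis .
qed

end

section \<open>Return probabilities of the biased walk\<close>

lemma incseq_quadratic_recursion_limit:
  fixes u :: "nat \<Rightarrow> real"
  assumes inc: "incseq u" and le1: "\<And>N. u N \<le> 1"
    and rec: "\<And>N. \<alpha> + \<beta> * u N ^ 2 \<le> u (Suc (2 * N))"
  shows "\<exists>L. u \<longlonglongrightarrow> L \<and> L \<le> 1 \<and> \<alpha> + \<beta> * L ^ 2 \<le> L"
proof -
  have "bdd_above (range u)"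
    using le1 by (intro bdd_aboveI[of _ 1]) auto
  then have lim: "u \<longlonglongrightarrow> (SUP N. u N)"
    by (rule LIMSEQ_incseq_SUP[OF _ inc])
  have "strict_mono (\<lambda>N. Suc (2 * N))"
    by (rule strict_monoI) simp
  then have "(\<lambda>N. u (Suc (2 * N))) \<longlonglongrightarrow> (SUP N. u N)"
    using LIMSEQ_subseq_LIMSEQ[OF lim] by (simp add: o_def)
  moreover have "(\<lambda>N. \<alpha> + \<beta> * u N ^ 2) \<longlonglongrightarrow> \<alpha> + \<beta> * (SUP N. u N) ^ 2"
    by (intro tendsto_intros lim)
  ultimately have "\<alpha> + \<beta> * (SUP N. u N) ^ 2 \<le> (SUP N. u N)"
    using rec by (intro LIMSEQ_le) auto
  moreover have "(SUP N. u N) \<le> 1"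
    using lim le1 by (intro LIMSEQ_le_const2) auto
  ultimately show ?thesis
    using lim by blast
qed

locale biased_path_space = path_space +
  assumes q_pos: "0 < q" and q_less_p: "q < p"
begin

lemma p_pos: "0 < p"
  using q_pos q_less_p by simp

text \<open>Reaching \<open>-2\<close> takes two successive first passages one level down, which yields
  \<open>h = q + p h\<^sup>2\<close> for the probability \<open>h\<close> of reaching \<open>-1\<close>; \<open>q/p\<close> is its smaller root.\<close>

lemma path_prob_visits_neg1_le: "path_prob N (visits (-1)) \<le> q / p"
proof (induction N rule: less_induct)
  case (less N)
  show ?case
  proof (cases N)
    case 0
    then show ?thesis using q_pos p_pos by (simp add: path_prob_0)
  next
    case (Suc n)
    have "path_prob n (visits (2 * (-1)))
        = (\<Sum>t\<le>n. path_prob t (first_passage (-1)) * path_prob (n - t) (visits (-1)))"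
      by (rule path_prob_visits_double) simp
    also have "\<dots> \<le> (\<Sum>t\<le>n. path_prob t (first_passage (-1)) * (q / p))"
      using less Suc by (intro sum_mono mult_left_mono path_prob_nonneg) auto
    also have "\<dots> = path_prob n (visits (-1)) * (q / p)"
      unfolding path_prob_visits by (rule sum_distrib_right[symmetric])
    also have "\<dots> \<le> (q / p) * (q / p)"
      using less Suc q_pos p_pos by (intro mult_right_mono) auto
    finally have "path_prob n (visits (-2)) \<le> (q / p) * (q / p)"
      by simp
    then have "path_prob N (visits (-1)) \<le> q + p * ((q / p) * (q / p))"
      unfolding Suc path_prob_visits_neg1_Suc using p_pos by (intro add_left_mono mult_left_mono) auto
    also have "\<dots> = q * (p + q) / p"
      using p_pos by (simp add: field_simps)
    finally show ?thesis
      using p_plus_q by simp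
  qed
qed

lemma path_prob_returns_le: "path_prob N (visits 0) \<le> 2 * q"
proof (cases N)
  case 0
  then show ?thesis using q_pos by (simp add: path_prob_0)
next
  case (Suc n)
  have "p * path_prob n (visits (-1)) \<le> p * (q / p)"
    using path_prob_visits_neg1_le p_pos by (intro mult_left_mono) auto
  moreover have "q * path_prob n (visits 1) \<le> q * 1"
    using path_prob_le_1 q_pos by (intro mult_left_mono) auto
  ultimately show ?thesis
    unfolding Suc path_prob_returns_Suc using p_pos by simp
qed

lemma path_prob_returns_count_le: "path_prob N (\<lambda>s. k \<le> visit_count 0 s) \<le> (2 * q) ^ k"
proof (induction k arbitrary: N)
  case 0
  then show ?case using path_prob_le_1 by simp
next
  case (Suc k)
  have "path_prob N (\<lambda>s. Suc k \<le> visit_count 0 s)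
      = (\<Sum>t\<le>N. path_prob t (first_passage 0) * path_prob (N - t) (\<lambda>s. k \<le> visit_count 0 s))"
    by (rule path_prob_Suc_le_visit_count)
  also have "\<dots> \<le> (\<Sum>t\<le>N. path_prob t (first_passage 0) * (2 * q) ^ k)"
    using Suc.IH by (intro sum_mono mult_left_mono path_prob_nonneg) auto
  also have "\<dots> = path_prob N (visits 0) * (2 * q) ^ k"
    by (simp add: path_prob_visits sum_distrib_right)
  also have "\<dots> \<le> (2 * q) * (2 * q) ^ k"
    using path_prob_returns_le q_pos by (intro mult_right_mono) auto
  finally show ?case
    by simp
qed

lemma path_prob_visit_count_le: "path_prob N (\<lambda>s. Suc k \<le> visit_count z s) \<le> (2 * q) ^ k"
proof -
  have "path_prob N (\<lambda>s. Suc k \<le> visit_count z s)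
      = (\<Sum>t\<le>N. path_prob t (first_passage z) * path_prob (N - t) (\<lambda>s. k \<le> visit_count 0 s))"
    by (rule path_prob_Suc_le_visit_count)
  also have "\<dots> \<le> (\<Sum>t\<le>N. path_prob t (first_passage z) * (2 * q) ^ k)"
    using path_prob_returns_count_le by (intro sum_mono mult_left_mono path_prob_nonneg) auto
  also have "\<dots> = path_prob N (visits z) * (2 * q) ^ k"
    by (simp add: path_prob_visits sum_distrib_right)
  also have "\<dots> \<le> (2 * q) ^ k"
    using path_prob_le_1 path_prob_nonneg q_pos by (intro mult_left_le_one_le) auto
  finally show ?thesis .
qed

lemma path_prob_visits_neg1_tendsto: "(\<lambda>N. path_prob N (visits (-1))) \<longlonglongrightarrow> q / p"
proof -
  obtain L where L: "(\<lambda>N. path_prob N (visits (-1))) \<longlonglongrightarrow> L" "L \<le> 1" "q + p * L ^ 2 \<le> L"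
  proof (atomize_elim, rule incseq_quadratic_recursion_limit)
    show "incseq (\<lambda>N. path_prob N (visits (-1)))"
      by (intro incseq_SucI path_prob_visits_mono) simp
    show "path_prob N (visits (-1)) \<le> 1" for N
      by (rule path_prob_le_1)
    show "q + p * path_prob N (visits (-1)) ^ 2 \<le> path_prob (Suc (2 * N)) (visits (-1))" for N
      using path_prob_visits_double_ge[of "-1" N] p_pos by (simp add: path_prob_visits_neg1_Suc)
  qed
  have "q / p \<le> L"
  proof (rule ccontr)
    assume "\<not> q / p \<le> L"
    then have "p * L < q"
      using p_pos by (simp add: field_simps)
    moreover have "q / p < 1"
      using p_pos q_less_p by simp
    then have "L < 1"
      using \<open>\<not> q / p \<le> L\<close> by linarith
    ultimately have "0 < (p * L - q) * (L - 1)"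
      by (intro mult_neg_neg) auto
    also have "(p * L - q) * (L - 1) = p * L ^ 2 + q - (p + q) * L"
      by (simp add: algebra_simps power2_eq_square)
    finally show False
      using L(3) p_plus_q by simp
  qed
  moreover have "L \<le> q / p"
    using path_prob_visits_neg1_le by (intro LIMSEQ_le_const2[OF L(1)]) auto
  ultimately show ?thesis
    using L(1) by simp
qed

lemma path_prob_visits_1_tendsto: "(\<lambda>N. path_prob N (visits 1)) \<longlonglongrightarrow> 1"
proof -
  obtain L where L: "(\<lambda>N. path_prob N (visits 1)) \<longlonglongrightarrow> L" "L \<le> 1" "p + q * L ^ 2 \<le> L"
  proof (atomize_elim, rule incseq_quadratic_recursion_limit)
    show "incseq (\<lambda>N. path_prob N (visits 1))"
      by (intro incseq_SucI path_prob_visits_mono) simp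
    show "path_prob N (visits 1) \<le> 1" for N
      by (rule path_prob_le_1)
    show "p + q * path_prob N (visits 1) ^ 2 \<le> path_prob (Suc (2 * N)) (visits 1)" for N
      using path_prob_visits_double_ge[of 1 N] q_pos by (simp add: path_prob_visits_1_Suc)
  qed
  have "L = 1"
  proof (rule ccontr)
    assume "L \<noteq> 1"
    with L(2) have "L < 1" by simp
    moreover have "q * L \<le> q"
      using L(2) q_pos by (simp add: mult_left_le)
    then have "q * L < p"
      using q_less_p by linarith
    ultimately have "0 < (q * L - p) * (L - 1)"
      by (intro mult_neg_neg) auto
    also have "(q * L - p) * (L - 1) = q * L ^ 2 + p - (p + q) * L"
      by (simp add: algebra_simps power2_eq_square)
    finally show False
      using L(3) p_plus_q by simp
  qed
  then show ?thesis
    using L(1) by simp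
qed

lemma path_prob_returns_tendsto: "(\<lambda>N. path_prob N (visits 0)) \<longlonglongrightarrow> 2 * q"
proof -
  have "(\<lambda>N. p * path_prob N (visits (-1)) + q * path_prob N (visits 1)) \<longlonglongrightarrow> p * (q / p) + q * 1"
    by (intro tendsto_add tendsto_mult_left path_prob_visits_neg1_tendsto path_prob_visits_1_tendsto)
  then have "(\<lambda>N. path_prob (Suc N) (visits 0)) \<longlonglongrightarrow> 2 * q"
    using p_pos by (simp add: path_prob_returns_Suc)
  then show ?thesis
    by (rule LIMSEQ_imp_Suc)
qed

definition growth_rate :: real where
  "growth_rate = -1 / ln (2 * q)"

lemma ln_two_q_eq: "ln (2 * q) = - (1 / growth_rate)"
  unfolding growth_rate_def using q_pos q_less_p p_plus_q by simp

lemma growth_rate_pos: "0 < growth_rate"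
  unfolding growth_rate_def using q_pos q_less_p p_plus_q by simp

lemma two_q_pow_le:
  assumes "y \<le> real k"
  shows "(2 * q) ^ k \<le> exp (- y / growth_rate)"
proof -
  have "(2 * q) ^ k = exp (real k * ln (2 * q))"
    using q_pos by (simp add: exp_of_nat_mult)
  also have "\<dots> = exp (- real k / growth_rate)"
    by (simp add: ln_two_q_eq)
  also have "\<dots> \<le> exp (- y / growth_rate)"
    using assms growth_rate_pos by (simp add: divide_right_mono)
  finally show ?thesis .
qed

text \<open>On the dyadic block \<open>2\<^sup>m \<le> n < 2\<^sup>m\<^sup>+\<^sup>1\<close> both thresholds are \<open>(1 \<plusminus> \<epsilon>) log n / (- log (2q))\<close> up to
  an additive constant. The lower bound compares the return probability with
  \<open>return_prob_target \<epsilon> = (2q)\<^sup>\<theta>\<close>, \<open>\<theta> = (1 - \<epsilon>/2) / (1 - \<epsilon>) > 1\<close>.\<close>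

definition upper_threshold :: "real \<Rightarrow> nat \<Rightarrow> nat" where
  "upper_threshold \<epsilon> m = nat \<lceil>(1 + \<epsilon>) * growth_rate * (real m + 1) * ln 2\<rceil>"

definition lower_threshold :: "real \<Rightarrow> nat \<Rightarrow> nat" where
  "lower_threshold \<epsilon> m = nat \<lceil>(1 - \<epsilon>) * growth_rate * real m * ln 2\<rceil>"

definition return_prob_target :: "real \<Rightarrow> real" where
  "return_prob_target \<epsilon> = exp (- ((1 - \<epsilon> / 2) / ((1 - \<epsilon>) * growth_rate)))"

lemma upper_threshold_le:
  assumes "0 \<le> \<epsilon>" "2 ^ m \<le> n"
  shows "real (upper_threshold \<epsilon> m) \<le> (1 + \<epsilon>) * growth_rate * ln (real n) + ((1 + \<epsilon>) * growth_rate * ln 2 + 1)"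
proof -
  have "0 \<le> (1 + \<epsilon>) * growth_rate * (real m + 1) * ln 2"
    using assms growth_rate_pos by simp
  then have "real (upper_threshold \<epsilon> m) \<le> (1 + \<epsilon>) * growth_rate * (real m * ln 2) + ((1 + \<epsilon>) * growth_rate * ln 2 + 1)"
    unfolding upper_threshold_def by (simp add: algebra_simps) linarith
  also have "\<dots> \<le> (1 + \<epsilon>) * growth_rate * ln (real n) + ((1 + \<epsilon>) * growth_rate * ln 2 + 1)"
    using ln_ge_if_pow2_le[OF assms(2)] assms growth_rate_pos by (intro add_right_mono mult_left_mono) auto
  finally show ?thesis .
qed

lemma lower_threshold_ge:
  assumes "\<epsilon> \<le> 1" "0 < n" "n < 2 ^ Suc m"
  shows "(1 - \<epsilon>) * growth_rate * ln (real n) - (1 - \<epsilon>) * growth_rate * ln 2 \<le> real (lower_threshold \<epsilon> m)"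
proof -
  have "(1 - \<epsilon>) * growth_rate * ln (real n) \<le> (1 - \<epsilon>) * growth_rate * ((real m + 1) * ln 2)"
    using ln_less_if_less_pow2[OF assms(2,3)] assms(1) growth_rate_pos by (intro mult_left_mono) auto
  then show ?thesis
    unfolding lower_threshold_def by (simp add: algebra_simps) linarith
qed

lemma dyadic_union_bound:
  assumes \<epsilon>: "0 < \<epsilon>"
  shows "(2 * real (2 ^ Suc m) + 1) * (2 * q) ^ upper_threshold \<epsilon> m \<le> 3 * exp (- (\<epsilon> * ln 2)) ^ m"
proof -
  define y where "y = (1 + \<epsilon>) * growth_rate * (real m + 1) * ln 2"
  have "(2 * q) ^ upper_threshold \<epsilon> m \<le> exp (- y / growth_rate)"
    unfolding upper_threshold_def y_def by (rule two_q_pow_le) linarith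
  also have "- y / growth_rate = - \<epsilon> * (real m + 1) * ln 2 - real (Suc m) * ln 2"
    unfolding y_def using growth_rate_pos by (simp add: field_simps)
  also have "exp \<dots> = exp (- \<epsilon> * (real m + 1) * ln 2) / 2 ^ Suc m"
  proof -
    have "exp (real (Suc m) * ln 2) = (2::real) ^ Suc m"
      by (subst exp_of_nat_mult) simp
    then show ?thesis
      by (simp only: exp_diff)
  qed
  also have "\<dots> \<le> exp (- (\<epsilon> * ln 2)) ^ m / 2 ^ Suc m"
    using \<epsilon> by (intro divide_right_mono) (simp_all add: exp_of_nat_mult[symmetric] algebra_simps)
  finally have "(2 * q) ^ upper_threshold \<epsilon> m \<le> exp (- (\<epsilon> * ln 2)) ^ m / 2 ^ Suc m" .
  moreover have "2 * real (2 ^ Suc m) + 1 \<le> 3 * 2 ^ Suc m"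
    using one_le_power[of "2::real" "Suc m"] by simp
  ultimately have "(2 * real (2 ^ Suc m) + 1) * (2 * q) ^ upper_threshold \<epsilon> m
      \<le> (3 * 2 ^ Suc m) * (exp (- (\<epsilon> * ln 2)) ^ m / 2 ^ Suc m)"
    using q_pos by (intro mult_mono) auto
  then show ?thesis
    by simp
qed

lemma return_prob_target_less:
  assumes "0 < \<epsilon>" "\<epsilon> < 1"
  shows "return_prob_target \<epsilon> < 2 * q"
proof -
  have "1 / growth_rate < (1 - \<epsilon> / 2) / ((1 - \<epsilon>) * growth_rate)"
    using assms growth_rate_pos by (simp add: field_simps)
  then have "return_prob_target \<epsilon> < exp (- (1 / growth_rate))"
    unfolding return_prob_target_def by simp
  also have "\<dots> = 2 * q"
    using q_pos by (simp only: ln_two_q_eq[symmetric] exp_ln)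
  finally show ?thesis .
qed

lemma lower_threshold_le:
  assumes "0 < \<epsilon>" "\<epsilon> < 1"
  shows "real (lower_threshold \<epsilon> m) \<le> growth_rate * real m + 1"
proof -
  define y where "y = (1 - \<epsilon>) * growth_rate * real m * ln 2"
  have "0 \<le> y"
    unfolding y_def using assms growth_rate_pos by simp
  then have "real (lower_threshold \<epsilon> m) \<le> y + 1"
    unfolding lower_threshold_def y_def[symmetric] by linarith
  moreover have "(1 - \<epsilon>) * ln 2 * (growth_rate * real m) \<le> 1 * (growth_rate * real m)"
    using assms ln_2_less_1 ln_gt_zero[of 2] growth_rate_pos
    by (intro mult_right_mono) (auto intro: mult_le_one)
  ultimately show ?thesis
    unfolding y_def by (simp add: algebra_simps)
qed

lemma return_prob_target_pow_ge:
  assumes "0 < \<epsilon>" "\<epsilon> < 1"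
  shows "return_prob_target \<epsilon> * exp (- ((1 - \<epsilon> / 2) * real m * ln 2))
    \<le> return_prob_target \<epsilon> ^ lower_threshold \<epsilon> m"
proof -
  define \<theta> where "\<theta> = (1 - \<epsilon> / 2) / ((1 - \<epsilon>) * growth_rate)"
  define y where "y = (1 - \<epsilon>) * growth_rate * real m * ln 2"
  have "\<theta> * y = (1 - \<epsilon> / 2) * real m * ln 2"
    unfolding \<theta>_def y_def using assms growth_rate_pos by (simp add: field_simps)
  moreover have "0 \<le> \<theta>"
    unfolding \<theta>_def using assms growth_rate_pos by simp
  then have "real (lower_threshold \<epsilon> m) * \<theta> \<le> (y + 1) * \<theta>"
    unfolding lower_threshold_def y_def using assms growth_rate_pos
    by (intro mult_right_mono) (auto simp: of_nat_nat ceiling_correct intro: le_of_int_ceiling)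
  ultimately show ?thesis
    unfolding return_prob_target_def \<theta>_def[symmetric]
    by (simp add: exp_of_nat_mult[symmetric] exp_add[symmetric] algebra_simps)
qed

lemma path_prob_dyadic_visit_counts_less:
  assumes \<epsilon>: "0 < \<epsilon>" "\<epsilon> < 1" and m: "1 \<le> m"
    and T: "return_prob_target \<epsilon> \<le> path_prob T (visits 0)"
  shows "path_prob (2 ^ m) (\<lambda>s. \<forall>z. visit_count z s < lower_threshold \<epsilon> m)
    \<le> exp 1 * ((growth_rate * real m + 1) * real T / return_prob_target \<epsilon>) * exp (- (\<epsilon> / 2 * ln 2)) ^ m"
proof -
  define \<rho> where "\<rho> = return_prob_target \<epsilon>"
  define k where "k = lower_threshold \<epsilon> m"
  define x where "x = exp (- (\<epsilon> / 2 * ln 2))"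
  define a where "a = 2 ^ m * \<rho> ^ k / real (k * T)"
  have \<rho>: "0 < \<rho>"
    unfolding \<rho>_def return_prob_target_def by simp
  have k: "0 < k"
    unfolding k_def lower_threshold_def using \<epsilon> m growth_rate_pos by simp
  have T0: "0 < T"
    using T \<rho> unfolding \<rho>_def by (cases T) (auto simp: path_prob_0)
  have "path_prob (2 ^ m) (\<lambda>s. \<forall>z. visit_count z s < k) \<le> exp (1 - a)"
    using path_prob_visit_counts_less_exp[OF k T0 less_imp_le[OF \<rho>] T[folded \<rho>_def], of "2 ^ m"]
    unfolding a_def by simp
  also have "\<dots> = exp 1 * exp (- a)"
    by (simp add: exp_add[symmetric])
  also have "\<dots> \<le> exp 1 * (1 / a)"
    using exp_neg_le_inverse[of a] \<rho> k T0 unfolding a_def by (intro mult_left_mono) auto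
  also have "1 / a \<le> (growth_rate * real m + 1) * real T / \<rho> * x ^ m"
  proof -
    have "x ^ m * 2 ^ m * exp (- ((1 - \<epsilon> / 2) * real m * ln 2))
        = exp (real m * - (\<epsilon> / 2 * ln 2) + real m * ln 2 + - ((1 - \<epsilon> / 2) * real m * ln 2))"
      unfolding exp_add x_def exp_of_nat_mult by simp
    also have "\<dots> = 1"
      by (simp add: algebra_simps)
    finally have "\<rho> / x ^ m = 2 ^ m * (\<rho> * exp (- ((1 - \<epsilon> / 2) * real m * ln 2)))"
      unfolding x_def by (simp add: field_simps)
    also have "\<dots> \<le> 2 ^ m * \<rho> ^ k"
      using return_prob_target_pow_ge[OF \<epsilon>, of m] unfolding \<rho>_def k_def by simp
    finally have "real (k * T) / (2 ^ m * \<rho> ^ k) \<le> real (k * T) / (\<rho> / x ^ m)"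
      using \<rho> by (intro divide_left_mono) (auto simp: x_def)
    also have "\<dots> = real k * real T * x ^ m / \<rho>"
      by simp
    also have "\<dots> \<le> (growth_rate * real m + 1) * real T * x ^ m / \<rho>"
      using lower_threshold_le[OF \<epsilon>, of m] \<rho> unfolding k_def
      by (intro divide_right_mono mult_right_mono) (auto simp: x_def)
    finally show ?thesis
      unfolding a_def by simp
  qed
  finally show ?thesis
    unfolding \<rho>_def k_def x_def by (simp add: mult.assoc)
qed

end

section \<open>Local times of a single path\<close>

lemma local_time_le: "local_time X z n w \<le> n"
proof -
  have "local_time X z n w \<le> card {1..n}"
    unfolding local_time_def by (intro card_mono) auto
  then show ?thesis
    by simp
qed

lemma finite_local_times: "finite {local_time X z n w | z. True}"
  by (rule finite_subset[of _ "{..n}"]) (auto intro: local_time_le)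

lemma local_time_le_max_local_time: "local_time X z n w \<le> max_local_time X n w"
  unfolding max_local_time_def by (rule Max_ge[OF finite_local_times]) auto

lemma total_local_time_eq_local_time:
  assumes "finite {t. 0 < t \<and> walk X t w = z}"
  shows "\<exists>N. total_local_time X z w = local_time X z N w"
proof -
  obtain N where "\<forall>t\<in>{t. 0 < t \<and> walk X t w = z}. t \<le> N"
    using assms finite_nat_set_iff_bounded_le by blast
  then have "{t. 0 < t \<and> t \<le> N \<and> walk X t w = z} = {t. 0 < t \<and> walk X t w = z}"
    by auto
  then show ?thesis
    unfolding local_time_def total_local_time_def by metis
qed

lemma eta_mono: "n \<le> n' \<Longrightarrow> eta X n w \<le> eta X n' w"
  unfolding eta_def by (rule Max_mono) auto

lemma max_local_time_le_eta:
  assumes fin: "\<forall>z. finite {t. 0 < t \<and> walk X t w = z}"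
  shows "max_local_time X n w \<le> eta X n w"
proof -
  have "max_local_time X n w \<in> {local_time X z n w | z. True}"
    unfolding max_local_time_def by (rule Max_in[OF finite_local_times]) auto
  then obtain z where z: "max_local_time X n w = local_time X z n w"
    by auto
  show ?thesis
  proof (cases "local_time X z n w = 0")
    case False
    then obtain t where t: "t \<le> n" "walk X t w = z"
      unfolding local_time_def by (metis (mono_tags, lifting) card.empty empty_Collect_eq)
    have "local_time X z n w \<le> total_local_time X z w"
      unfolding local_time_def total_local_time_def by (intro card_mono) (use fin in auto)
    also have "\<dots> \<le> eta X n w"
      unfolding eta_def using t by (intro Max_ge) auto
    finally show ?thesis
      using z by simp
  qed (use z in simp)
qed

lemma abs_walk_le:
  assumes "\<forall>i\<ge>1. X i w \<in> {-1, 1}"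
  shows "\<bar>walk X j w\<bar> \<le> int j"
proof -
  have "\<bar>walk X j w\<bar> \<le> (\<Sum>i\<in>{1..j}. \<bar>X i w\<bar>)"
    unfolding walk_def by (rule sum_abs)
  also have "\<dots> = (\<Sum>i\<in>{1..j}. 1)"
    using assms by (intro sum.cong) auto
  finally show ?thesis
    by simp
qed

section \<open>The walk on a probability space\<close>

lemma (in prob_space) AE_eventually_dyadic_not_in:
  assumes "summable (\<lambda>m. prob (U m))" and "\<And>m. U m \<in> events"
  shows "AE w in M. eventually (\<lambda>n. \<exists>m. w \<in> space M - U m \<and> 2 ^ m \<le> n \<and> n < 2 ^ Suc m) sequentially"
proof -
  have "AE w in M. eventually (\<lambda>m. w \<in> space M - U m) sequentially"
    using assms by (intro borel_cantelli_AE1) (auto simp: emeasure_eq_measure)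
  then show ?thesis
    by eventually_elim (rule eventually_dyadic)
qed

locale bernoulli_walk = biased_path_space p q + prob_space M
  for p q :: real and M :: "'a measure" +
  fixes X :: "nat \<Rightarrow> 'a \<Rightarrow> int"
  assumes indep: "indep_vars (\<lambda>_. count_space UNIV) X {1..}"
    and prob_step_1: "\<And>i. i \<ge> 1 \<Longrightarrow> prob {w \<in> space M. X i w = 1} = p"
    and prob_step_neg1: "\<And>i. i \<ge> 1 \<Longrightarrow> prob {w \<in> space M. X i w = -1} = q"
begin

definition steps :: "nat \<Rightarrow> 'a \<Rightarrow> int list" where
  "steps N w = map (\<lambda>i. X (Suc i) w) [0..<N]"

lemma steps_take: "N \<le> N' \<Longrightarrow> steps N w = take N (steps N' w)"
  by (simp add: steps_def take_map)

lemma walk_eq_sum_steps: "n \<le> N \<Longrightarrow> walk X n w = sum_list (take n (steps N w))"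
  by (simp add: steps_take[symmetric] steps_def walk_def sum_list_sum_nth atLeast0LessThan
      sum.atLeast1_atMost_eq)

lemma local_time_eq_visit_count: "local_time X z n w = visit_count z (steps n w)"
proof -
  have "{k. 0 < k \<and> k \<le> n \<and> walk X k w = z} = {t\<in>{1..length (steps n w)}. sum_list (take t (steps n w)) = z}"
    by (auto simp: steps_def walk_eq_sum_steps)
  then show ?thesis
    unfolding local_time_def visit_count_def by simp
qed

lemma visit_count_steps_mono: "N \<le> N' \<Longrightarrow> visit_count z (steps N w) \<le> visit_count z (steps N' w)"
  using visit_count_take_le[of z N "steps N' w"] by (simp add: steps_take)

lemma step_measurable: "i \<ge> 1 \<Longrightarrow> X i \<in> measurable M (count_space UNIV)"
  using indep unfolding indep_vars_def2 by auto

lemma sets_step_eq: "i \<ge> 1 \<Longrightarrow> {w \<in> space M. X i w = x} \<in> sets M"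
  using measurable_sets[OF step_measurable, of i "{x}"] by (simp add: vimage_def Int_def conj_commute)

lemma AE_step_pm1: "i \<ge> 1 \<Longrightarrow> AE w in M. X i w \<in> {-1, 1}"
proof -
  assume i: "i \<ge> 1"
  let ?A = "{w \<in> space M. X i w = 1} \<union> {w \<in> space M. X i w = -1}"
  have A: "?A \<in> sets M"
    using sets_step_eq[OF i] by auto
  have "prob ?A = prob {w \<in> space M. X i w = 1} + prob {w \<in> space M. X i w = -1}"
    by (rule finite_measure_Union) (use sets_step_eq[OF i] in auto)
  then have "prob ?A = p + q"
    using prob_step_1[OF i] prob_step_neg1[OF i] by simp
  then have "prob (space M - ?A) = 0"
    using prob_compl[OF A] p_plus_q by simp
  then have "space M - ?A \<in> null_sets M"
    using A by (simp add: null_sets_def emeasure_eq_measure)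
  then show ?thesis
    by (rule AE_I') auto
qed

lemma AE_steps_pm1: "AE w in M. \<forall>i\<ge>1. X i w \<in> {-1, 1}"
  unfolding AE_all_countable using AE_step_pm1 by auto

lemma AE_steps_in_paths: "AE w in M. \<forall>N. steps N w \<in> paths N"
  using AE_steps_pm1 by eventually_elim (auto simp: steps_def paths_def)

lemma sets_steps_eq: "{w \<in> space M. steps N w = s} \<in> sets M"
proof -
  have "{w \<in> space M. steps N w = s} = {w \<in> space M. length s = N \<and> (\<forall>i\<in>{..<N}. X (Suc i) w = s ! i)}"
    by (auto simp: steps_def list_eq_iff_nth_eq)
  also have "\<dots> \<in> sets M"
    by (intro sets.sets_Collect_conj sets.sets_Collect_const sets.sets_Collect_finite_All sets_step_eq) auto
  finally show ?thesis .
qed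

lemma sets_steps: "{w \<in> space M. P (steps N w)} \<in> sets M"
proof -
  have "{w \<in> space M. P (steps N w)} = {w \<in> space M. \<exists>s. P s \<and> steps N w = s}"
    by auto
  also have "\<dots> \<in> sets M"
    by (intro sets.sets_Collect_countable_Ex sets.sets_Collect_conj sets.sets_Collect_const sets_steps_eq)
  finally show ?thesis .
qed

lemma prob_steps_eq:
  assumes s: "s \<in> paths N"
  shows "prob {w \<in> space M. steps N w = s} = path_weight s"
proof (cases "N = 0")
  case True
  then show ?thesis
    using s by (simp add: paths_0 steps_def path_weight_def prob_space)
next
  case False
  define A where "A j = X j -` {s ! (j - 1)} \<inter> space M" for j
  have "indep_sets (\<lambda>i. {X i -` A \<inter> space M | A. A \<in> sets (count_space UNIV)}) {1..}"
    using indep unfolding indep_vars_def2 by auto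
  then have "prob (\<Inter>j\<in>{1..N}. A j) = (\<Prod>j\<in>{1..N}. prob (A j))"
    by (rule indep_setsD) (use False in \<open>auto simp: A_def\<close>)
  also have "\<dots> = (\<Prod>i<N. prob {w \<in> space M. X (Suc i) w = s ! i})"
    by (simp add: prod.atLeast1_atMost_eq A_def Int_def vimage_def conj_commute)
  also have "\<dots> = (\<Prod>i<N. if s ! i = 1 then p else q)"
  proof (rule prod.cong)
    fix i assume "i \<in> {..<N}"
    then have "s ! i \<in> {-1, 1}"
      using s paths_length paths_set nth_mem by blast
    then show "prob {w \<in> space M. X (Suc i) w = s ! i} = (if s ! i = 1 then p else q)"
      using prob_step_1 prob_step_neg1 by auto
  qed simp
  also have "\<dots> = path_weight s"
    using s by (simp add: path_weight_def prod.list_conv_set_nth atLeast0LessThan paths_length)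
  also have "(\<Inter>j\<in>{1..N}. A j) = (\<Inter>i<N. A (Suc i))"
    by (simp only: image_Suc_lessThan[symmetric] image_image)
  also have "\<dots> = {w \<in> space M. steps N w = s}"
    using False paths_length[OF s] by (auto simp: A_def steps_def list_eq_iff_nth_eq)
  finally show ?thesis .
qed

lemma prob_steps: "prob {w \<in> space M. P (steps N w)} = path_prob N P"
proof -
  have fin: "finite {s\<in>paths N. P s}"
    using finite_paths by simp
  have "prob {w \<in> space M. P (steps N w)} = prob (\<Union>s\<in>{s\<in>paths N. P s}. {w \<in> space M. steps N w = s})"
    by (rule finite_measure_eq_AE)
      (use AE_steps_in_paths in \<open>auto intro!: sets.finite_UN fin sets_steps_eq sets_steps\<close>)
  also have "\<dots> = (\<Sum>s\<in>{s\<in>paths N. P s}. prob {w \<in> space M. steps N w = s})"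
    by (rule finite_measure_finite_Union) (auto intro: fin sets_steps_eq simp: disjoint_family_on_def)
  also have "\<dots> = path_prob N P"
    unfolding path_prob_def by (rule sum.cong) (auto intro: prob_steps_eq)
  finally show ?thesis .
qed

definition total_visits_ge :: "int \<Rightarrow> nat \<Rightarrow> 'a set" where
  "total_visits_ge z k = {w \<in> space M. \<exists>N. k \<le> visit_count z (steps N w)}"

lemma sets_total_visits_ge: "total_visits_ge z k \<in> sets M"
  unfolding total_visits_ge_def by (intro sets.sets_Collect_countable_Ex sets_steps)

lemma prob_total_visits_ge: "prob (total_visits_ge z (Suc k)) \<le> (2 * q) ^ k"
proof -
  define A where "A N = {w \<in> space M. Suc k \<le> visit_count z (steps N w)}" for N
  have "incseq A"
    unfolding A_def incseq_def using visit_count_steps_mono le_trans by blast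
  moreover have "range A \<subseteq> sets M"
    unfolding A_def using sets_steps by auto
  ultimately have "(\<lambda>N. prob (A N)) \<longlonglongrightarrow> prob (\<Union>N. A N)"
    by (intro finite_Lim_measure_incseq)
  moreover have "(\<Union>N. A N) = total_visits_ge z (Suc k)"
    unfolding total_visits_ge_def A_def by auto
  moreover have "prob (A N) \<le> (2 * q) ^ k" for N
    using prob_steps[of "\<lambda>s. Suc k \<le> visit_count z s" N] path_prob_visit_count_le[of N k z]
    unfolding A_def by simp
  ultimately show ?thesis
    by (metis LIMSEQ_le_const2)
qed

lemma prob_UN_total_visits_ge:
  "prob (\<Union>z\<in>{-int n..int n}. total_visits_ge z (Suc k)) \<le> (2 * real n + 1) * (2 * q) ^ k"
proof -
  have "prob (\<Union>z\<in>{-int n..int n}. total_visits_ge z (Suc k)) \<le> (\<Sum>z\<in>{-int n..int n}. prob (total_visits_ge z (Suc k)))"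
    by (rule measure_UNION_le) (auto intro: sets_total_visits_ge)
  also have "\<dots> \<le> (\<Sum>z\<in>{-int n..int n}. (2 * q) ^ k)"
    by (intro sum_mono prob_total_visits_ge)
  finally show ?thesis
    by simp
qed

lemma AE_finite_visits: "AE w in M. \<forall>z. finite {t. 0 < t \<and> walk X t w = z}"
  unfolding AE_all_countable
proof
  fix z :: int
  have "(\<Inter>k. total_visits_ge z (Suc k)) \<in> null_sets M"
  proof -
    have "prob (\<Inter>k. total_visits_ge z (Suc k)) \<le> (2 * q) ^ k" for k
      using finite_measure_mono[of "\<Inter>k. total_visits_ge z (Suc k)" "total_visits_ge z (Suc k)"]
        sets_total_visits_ge prob_total_visits_ge[of z k] by fastforce
    moreover have "(\<lambda>k. (2 * q) ^ k) \<longlonglongrightarrow> 0"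
      using q_pos q_less_p p_plus_q by (intro LIMSEQ_power_zero) simp
    ultimately have "prob (\<Inter>k. total_visits_ge z (Suc k)) \<le> 0"
      using LIMSEQ_le_const by blast
    then show ?thesis
      using sets_total_visits_ge by (simp add: null_sets_def emeasure_eq_measure measure_le_0_iff)
  qed
  then show "AE w in M. finite {t. 0 < t \<and> walk X t w = z}"
  proof (rule AE_I')
    show "{w \<in> space M. \<not> finite {t. 0 < t \<and> walk X t w = z}} \<subseteq> (\<Inter>k. total_visits_ge z (Suc k))"
    proof safe
      fix w k assume w: "w \<in> space M" "infinite {t. 0 < t \<and> walk X t w = z}"
      obtain B where B: "B \<subseteq> {t. 0 < t \<and> walk X t w = z}" "finite B" "card B = Suc k"
        using infinite_arbitrarily_large[OF w(2)] by blast
      then have "B \<subseteq> {t. 0 < t \<and> t \<le> Max B \<and> walk X t w = z}"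
        by auto
      then have "card B \<le> local_time X z (Max B) w"
        unfolding local_time_def by (intro card_mono) auto
      then have "Suc k \<le> visit_count z (steps (Max B) w)"
        using B(3) by (simp add: local_time_eq_visit_count)
      then show "w \<in> total_visits_ge z (Suc k)"
        unfolding total_visits_ge_def using w(1) by blast
    qed
  qed
qed

lemma eta_ge_imp_total_visits_ge:
  assumes w: "w \<in> space M" "\<forall>i\<ge>1. X i w \<in> {-1, 1}" and k: "Suc k \<le> eta X n w"
  shows "w \<in> (\<Union>z\<in>{-int n..int n}. total_visits_ge z (Suc k))"
proof -
  have "finite {total_local_time X (walk X j w) w | j. j \<le> n}"
    by simp
  then obtain j where j: "j \<le> n" "Suc k \<le> total_local_time X (walk X j w) w"
    using k unfolding eta_def by (subst (asm) Max_ge_iff) auto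
  then have "finite {t. 0 < t \<and> walk X t w = walk X j w}"
    unfolding total_local_time_def by (intro card_ge_0_finite) simp
  then obtain N where "total_local_time X (walk X j w) w = visit_count (walk X j w) (steps N w)"
    using total_local_time_eq_local_time local_time_eq_visit_count by metis
  moreover have "walk X j w \<in> {-int n..int n}"
    using abs_walk_le[of X w j] w(2) j(1) by auto
  ultimately show ?thesis
    unfolding total_visits_ge_def using w(1) j(2) by fastforce
qed

lemma AE_eta_upper:
  assumes \<epsilon>: "0 < \<epsilon>"
  shows "AE w in M. \<exists>C. eventually (\<lambda>n. real (eta X n w) \<le> (1 + \<epsilon>) * growth_rate * ln (real n) + C) sequentially"
proof -
  define U where
    "U m = (\<Union>z\<in>{-int (2 ^ Suc m)..int (2 ^ Suc m)}. total_visits_ge z (Suc (upper_threshold \<epsilon> m)))" for m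
  have "summable (\<lambda>m. prob (U m))"
  proof (rule summable_comparison_test')
    show "summable (\<lambda>m. 3 * exp (- (\<epsilon> * ln 2)) ^ m)"
      using \<epsilon> by (intro summable_mult summable_geometric) simp
    show "norm (prob (U m)) \<le> 3 * exp (- (\<epsilon> * ln 2)) ^ m" for m
      using prob_UN_total_visits_ge[where n = "2 ^ Suc m" and k = "upper_threshold \<epsilon> m"]
        dyadic_union_bound[OF \<epsilon>, of m]
      unfolding U_def by simp
  qed
  then have "AE w in M. eventually (\<lambda>n. \<exists>m. w \<in> space M - U m \<and> 2 ^ m \<le> n \<and> n < 2 ^ Suc m) sequentially"
    by (rule AE_eventually_dyadic_not_in) (unfold U_def, auto intro: sets_total_visits_ge)
  with AE_steps_pm1 show ?thesis
  proof eventually_elim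
    case (elim w)
    from elim(2) have "eventually (\<lambda>n. real (eta X n w)
        \<le> (1 + \<epsilon>) * growth_rate * ln (real n) + ((1 + \<epsilon>) * growth_rate * ln 2 + 1)) sequentially"
    proof eventually_elim
      case (elim n)
      then obtain m where m: "w \<in> space M - U m" "2 ^ m \<le> n" "n < 2 ^ Suc m"
        by blast
      have "eta X n w \<le> eta X (2 ^ Suc m) w"
        using m(3) by (intro eta_mono) simp
      also have "\<dots> \<le> upper_threshold \<epsilon> m"
        using eta_ge_imp_total_visits_ge[of w "upper_threshold \<epsilon> m" "2 ^ Suc m"] m(1)
          \<open>\<forall>i\<ge>1. X i w \<in> {-1, 1}\<close>
        unfolding U_def by (meson DiffE not_less_eq_eq)
      finally show ?case
        using upper_threshold_le[of \<epsilon> m n] \<epsilon> m(2) by linarith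
    qed
    then show ?case
      by blast
  qed
qed

lemma AE_max_local_time_lower:
  assumes \<epsilon>: "0 < \<epsilon>" "\<epsilon> < 1"
  shows "AE w in M. \<exists>C. eventually
    (\<lambda>n. (1 - \<epsilon>) * growth_rate * ln (real n) - C \<le> real (max_local_time X n w)) sequentially"
proof -
  obtain T where T: "return_prob_target \<epsilon> < path_prob T (visits 0)"
    using order_tendstoD(1)[OF path_prob_returns_tendsto return_prob_target_less[OF \<epsilon>]]
    by (meson eventually_sequentially order_refl)
  define V where "V m = {w \<in> space M. \<forall>z. visit_count z (steps (2 ^ m) w) < lower_threshold \<epsilon> m}" for m
  define c where "c = exp 1 * real T / return_prob_target \<epsilon>"
  have "summable (\<lambda>m. prob (V m))"
  proof (rule summable_comparison_test')
    show "summable (\<lambda>m. (c * growth_rate * real m + c) * exp (- (\<epsilon> / 2 * ln 2)) ^ m)"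
      using \<epsilon> by (intro summable_linear_times_power) auto
    show "norm (prob (V m)) \<le> (c * growth_rate * real m + c) * exp (- (\<epsilon> / 2 * ln 2)) ^ m"
      if "1 \<le> m" for m
      using prob_steps[of "\<lambda>s. \<forall>z. visit_count z s < lower_threshold \<epsilon> m" "2 ^ m"]
        path_prob_dyadic_visit_counts_less[OF \<epsilon> that less_imp_le[OF T]]
      unfolding V_def c_def by (simp add: path_prob_nonneg algebra_simps add_divide_distrib)
  qed
  then have "AE w in M. eventually (\<lambda>n. \<exists>m. w \<in> space M - V m \<and> 2 ^ m \<le> n \<and> n < 2 ^ Suc m) sequentially"
    by (rule AE_eventually_dyadic_not_in) (unfold V_def, rule sets_steps)
  then show ?thesis
  proof eventually_elim
    case (elim w)
    from elim have "eventually (\<lambda>n. (1 - \<epsilon>) * growth_rate * ln (real n) - (1 - \<epsilon>) * growth_rate * ln 2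
        \<le> real (max_local_time X n w)) sequentially"
    proof eventually_elim
      case (elim n)
      then obtain m where m: "w \<in> space M - V m" "2 ^ m \<le> n" "n < 2 ^ Suc m"
        by blast
      then obtain z where "lower_threshold \<epsilon> m \<le> visit_count z (steps (2 ^ m) w)"
        unfolding V_def by (auto simp: not_less)
      also have "\<dots> \<le> visit_count z (steps n w)"
        using m(2) by (rule visit_count_steps_mono)
      also have "\<dots> \<le> max_local_time X n w"
        using local_time_le_max_local_time by (simp add: local_time_eq_visit_count[symmetric])
      finally show ?case
        using lower_threshold_ge[of \<epsilon> n m] \<epsilon> m(2,3) by (simp add: less_le_trans[of 0 "2 ^ m"])
    qed
    then show ?case
      by blast
  qed
qed

end

theorem theorem3p1:
  fixes M :: "'a measure" and X :: "nat \<Rightarrow> 'a \<Rightarrow> int" and p q :: real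
  assumes "prob_space M"
    and "0 < q" and "q < p" and "p < 1" and "p + q = 1"
    and "prob_space.indep_vars M (\<lambda>_. count_space UNIV) X {1..}"
    and "\<And>i. i \<ge> 1 \<Longrightarrow> measure M {w \<in> space M. X i w = 1} = p"
    and "\<And>i. i \<ge> 1 \<Longrightarrow> measure M {w \<in> space M. X i w = -1} = q"
  shows "AE w in M.
           (\<lambda>n. real (max_local_time X n w) / ln (real n)) \<longlonglongrightarrow> -1 / ln (2 * q)
         \<and> (\<lambda>n. real (eta X n w) / ln (real n)) \<longlonglongrightarrow> -1 / ln (2 * q)"
proof -
  interpret bernoulli_walk p q M X
    using assms by (simp add: bernoulli_walk_def bernoulli_walk_axioms_def biased_path_space_def
        biased_path_space_axioms_def path_space_def)
  have "AE w in M. \<forall>j::nat. \<exists>C. eventually (\<lambda>n. (1 - 1 / (real j + 2)) * growth_rate * ln (real n) - C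
      \<le> real (max_local_time X n w)) sequentially"
    unfolding AE_all_countable by (intro allI AE_max_local_time_lower) auto
  moreover have "AE w in M. \<forall>j::nat. \<exists>C. eventually (\<lambda>n. real (eta X n w)
      \<le> (1 + 1 / (real j + 2)) * growth_rate * ln (real n) + C) sequentially"
    unfolding AE_all_countable by (intro allI AE_eta_upper) auto
  ultimately show ?thesis
    using AE_finite_visits
  proof eventually_elim
    case (elim w)
    have "real (max_local_time X n w) \<le> real (eta X n w)" for n
      using max_local_time_le_eta[OF elim(3)] by simp
    from tendsto_div_ln_sandwich[OF growth_rate_pos this elim(1)[rule_format] elim(2)[rule_format]]
    show ?case
      unfolding growth_rate_def ..
  qed
qed

end
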